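(* Let $\Omega\subset\mathbb{R}^2$ be compact with non-empty interior. For every $h>0$, every solid angle center of $\Omega$ of height $h$ belongs to the minimal unfolded region $uf(\Omega)$.
   Context: For a compact $\Omega\subset\mathbb{R}^2$ with non-empty interior, $h>0$ and $x\in\mathbb{R}^2$, $A_\Omega^{(h)}(x)=\int_\Omega \frac{h}{(|y-x|^2+h^2)^{3/2}}\,dy$. A point $x$ is a solid angle center of $\Omega$ of height $h$ if it maximizes $A_\Omega^{(h)}$ over $\mathbb{R}^2$. Minimal unfolded region: for a unit vector $v\in S^1$ and $c\in\mathbb{R}$, let $I_{v,c}$ be the reflection of $\mathbb{R}^2$ in the line $\{z: z\cdot v=c\}$; let $\Omega^+_{v,a}=\Omega\cap\{z: z\cdot v\ge a\}$ and $\Omega^-_{v,a}=\Omega\cap\{z: z\cdot v\le a\}$. Put $u(v)=\inf\{b\in\mathbb{R}: I_{v,c}(\Omega^+_{v,c})\subset\Omega \text{ for all } c\ge b\}$ and $l(v)=\sup\{b\in\mathbb{R}: I_{v,c}(\Omega^-_{v,c})\subset\Omega \text{ for all } c\le b\}$. Then $uf(\Omega)=\bigcap_{v\in S^1}\{z\in\mathbb{R}^2: l(v)\le z\cdot v\le u(v)\}$. *)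

theory Defs
  imports "HOL-Analysis.Analysis"
begin

definition solid_angle :: "(real^2) set \<Rightarrow> real \<Rightarrow> real^2 \<Rightarrow> real" where
  "solid_angle \<Omega> h x =
     integral \<Omega> (\<lambda>y. h / ((norm (y - x))\<^sup>2 + h\<^sup>2) powr (3/2))"

definition solid_angle_center :: "(real^2) set \<Rightarrow> real \<Rightarrow> real^2 \<Rightarrow> bool" where
  "solid_angle_center \<Omega> h x \<longleftrightarrow> (\<forall>y. solid_angle \<Omega> h y \<le> solid_angle \<Omega> h x)"

text \<open>Reflection in the line {z. z \<bullet> v = c} (v a unit vector).\<close>
definition refl_line :: "real^2 \<Rightarrow> real \<Rightarrow> real^2 \<Rightarrow> real^2" where
  "refl_line v c z = z - (2 * (z \<bullet> v - c)) *\<^sub>R v"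

definition cap_plus :: "(real^2) set \<Rightarrow> real^2 \<Rightarrow> real \<Rightarrow> (real^2) set" where
  "cap_plus \<Omega> v a = \<Omega> \<inter> {z. z \<bullet> v \<ge> a}"

definition cap_minus :: "(real^2) set \<Rightarrow> real^2 \<Rightarrow> real \<Rightarrow> (real^2) set" where
  "cap_minus \<Omega> v a = \<Omega> \<inter> {z. z \<bullet> v \<le> a}"

definition uf_upper :: "(real^2) set \<Rightarrow> real^2 \<Rightarrow> real" where
  "uf_upper \<Omega> v = Inf {b. \<forall>c\<ge>b. refl_line v c ` cap_plus \<Omega> v c \<subseteq> \<Omega>}"

definition uf_lower :: "(real^2) set \<Rightarrow> real^2 \<Rightarrow> real" where
  "uf_lower \<Omega> v = Sup {b. \<forall>c\<le>b. refl_line v c ` cap_minus \<Omega> v c \<subseteq> \<Omega>}"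

definition min_unfolded_region :: "(real^2) set \<Rightarrow> (real^2) set" where
  "min_unfolded_region \<Omega> =
     (\<Inter>v\<in>{v. norm v = 1}. {z. uf_lower \<Omega> v \<le> z \<bullet> v \<and> z \<bullet> v \<le> uf_upper \<Omega> v})"

end

theory Submission imports Defs begin

(* Let x be a solid angle center of the compact set \<Omega> and v a unit vector. By the symmetry
   v \<mapsto> -v, which exchanges l and u, it suffices to show x \<bullet> v \<le> u(v).  Suppose instead
   u(v) < x \<bullet> v and pick a line {z \<bullet> v = c} with u(v) < c < x \<bullet> v; write I for the
   reflection in it.  The cap of \<Omega> above the line reflects into \<Omega>.  Since the kernel is
   strictly decreasing in the distance, every point below the line is closer to I x than to x,
   and every point above it closer to x.  Integrating the kernel difference g against the
   indicators of \<Omega> and I \<Omega> (the two integrals are opposite, because g \<circ> I = -g) then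
   shows: if some interior point of \<Omega> below the line had its mirror image outside \<Omega>, the
   solid angle at I x would exceed the one at x.  Hence I maps the interior of \<Omega> into itself,
   for every such c.  But the composition of the reflections in two distinct parallel lines is
   a translation, and no non-empty bounded set is invariant under a translation. *)

section \<open>Reflections in lines\<close>

lemma refl_line_inner: "norm v = 1 \<Longrightarrow> refl_line v c z \<bullet> v = 2 * c - z \<bullet> v"
  unfolding refl_line_def by (simp add: inner_diff_left norm_eq_1 algebra_simps)

lemma refl_line_involution: "norm v = 1 \<Longrightarrow> refl_line v c (refl_line v c z) = z"
  unfolding refl_line_def[of v c "refl_line v c z"]
  by (simp add: refl_line_inner) (simp add: refl_line_def algebra_simps)

lemma refl_line_affine: "refl_line v c z = refl_line v 0 z + (2 * c) *\<^sub>R v"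
  unfolding refl_line_def by (simp add: algebra_simps)

lemma orthogonal_transformation_refl_line:
  assumes "norm v = 1" shows "orthogonal_transformation (refl_line v 0)"
proof -
  have "v \<bullet> v = 1" using assms by (simp add: norm_eq_1)
  then show ?thesis
    unfolding orthogonal_transformation_def refl_line_def linear_iff
    by (simp add: inner_diff_left inner_diff_right inner_add_left inner_commute algebra_simps)
qed

lemma refl_line_dist: "norm v = 1 \<Longrightarrow> norm (refl_line v c y - refl_line v c z) = norm (y - z)"
  using orthogonal_transformation_norm[OF orthogonal_transformation_refl_line, of v "y - z"]
    linear_diff[OF orthogonal_transformation_linear[OF orthogonal_transformation_refl_line]]
  by (metis refl_line_affine add_diff_cancel_right)

lemma refl_line_dist_swap: "norm v = 1 \<Longrightarrow> norm (refl_line v c y - x) = norm (y - refl_line v c x)"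
  by (metis refl_line_involution refl_line_dist)

text \<open>Reflecting the second point changes the squared distance by a term whose sign says
  whether the two points lie on the same side of the line.\<close>

lemma refl_line_dist_sq:
  assumes "norm v = 1"
  shows "(norm (y - refl_line v c x))\<^sup>2 = (norm (y - x))\<^sup>2 + 4 * (x \<bullet> v - c) * (y \<bullet> v - c)"
proof -
  have vv: "v \<bullet> v = 1" using assms by (simp add: norm_eq_1)
  have "y - refl_line v c x = (y - x) + (2 * (x \<bullet> v - c)) *\<^sub>R v"
    unfolding refl_line_def by simp
  then have "(norm (y - refl_line v c x))\<^sup>2 = (norm ((y - x) + (2 * (x \<bullet> v - c)) *\<^sub>R v))\<^sup>2"
    by (simp only:)
  also have "\<dots> = (norm (y - x))\<^sup>2 + 4 * (x \<bullet> v - c) * (y \<bullet> v - c)"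
    unfolding power2_norm_eq_inner using vv
    by (simp add: inner_add_left inner_add_right inner_diff_left inner_diff_right
        inner_commute power2_eq_square algebra_simps)
  finally show ?thesis .
qed

lemma refl_line_has_derivative:
  assumes "norm v = 1" shows "(refl_line v c has_derivative refl_line v 0) F"
proof -
  have "bounded_linear (refl_line v 0)"
    using orthogonal_transformation_linear[OF orthogonal_transformation_refl_line[OF assms]]
    by (simp add: linear_conv_bounded_linear)
  then have "((\<lambda>z. refl_line v 0 z + (2 * c) *\<^sub>R v) has_derivative refl_line v 0) F"
    by (intro has_derivative_add_const bounded_linear_imp_has_derivative)
  then show ?thesis by (simp add: refl_line_affine[symmetric])
qed

lemma continuous_on_refl_line: "continuous_on A (refl_line v c)"
  unfolding refl_line_def by (intro continuous_intros)

text \<open>Being an involution, a reflection maps a set onto its own preimage.\<close>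

lemma refl_line_image_eq_vimage: "norm v = 1 \<Longrightarrow> refl_line v c ` A = refl_line v c -` A"
  by (auto simp: image_iff) (metis refl_line_involution)+

lemma refl_line_uminus: "refl_line (- v) (- c) = refl_line v c"
  unfolding refl_line_def by (rule ext) (simp add: algebra_simps)

lemma continuous_absolutely_integrable_on_compact:
  fixes f :: "'a::euclidean_space \<Rightarrow> 'b::euclidean_space"
  assumes "compact S" "continuous_on UNIV f"
  shows "f absolutely_integrable_on S"
proof -
  obtain a where "S \<subseteq> cbox (- a) a"
    using bounded_subset_cbox_symmetric[OF compact_imp_bounded[OF assms(1)]] by blast
  moreover have "f absolutely_integrable_on cbox (- a) a"
    using assms(2) by (intro absolutely_integrable_continuous) (rule continuous_on_subset, auto)
  moreover have "S \<in> sets lebesgue"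
    using lmeasurable_compact[OF assms(1)] by (simp add: fmeasurableD)
  ultimately show ?thesis using set_integrable_subset by blast
qed

lemma continuous_integrable_on_compact:
  fixes f :: "'a::euclidean_space \<Rightarrow> 'b::euclidean_space"
  shows "compact S \<Longrightarrow> continuous_on UNIV f \<Longrightarrow> f integrable_on S"
  using continuous_absolutely_integrable_on_compact absolutely_integrable_on_def by blast

text \<open>Reflections preserve Lebesgue measure, so integrals transform without a Jacobian factor.
  The library's change of variables is stated for vector-valued maps; we pass through
  \<open>real^1\<close>.\<close>

lemma integral_refl_line_image:
  fixes g :: "real^2 \<Rightarrow> real"
  assumes v: "norm v = 1" and S: "compact S" and g: "continuous_on UNIV g"
  shows "integral (refl_line v c ` S) g = integral S (\<lambda>z. g (refl_line v c z))"
proof -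
  let ?I = "refl_line v c" and ?f = "\<lambda>y. vec (g y) :: real^1"
  have fc: "continuous_on UNIV ?f"
    using g unfolding vec_def by (intro continuous_on_vec_lambda)
  have fIc: "continuous_on UNIV (\<lambda>z. ?f (?I z))"
    by (rule continuous_on_compose2[OF fc continuous_on_refl_line]) auto
  have inj: "inj_on ?I S" by (metis inj_on_inverseI refl_line_involution v)
  have "?f absolutely_integrable_on ?I ` S"
    by (rule continuous_absolutely_integrable_on_compact
        [OF compact_continuous_image[OF continuous_on_refl_line S] fc])
  then have "integral (?I ` S) ?f
      = integral S (\<lambda>z. \<bar>det (matrix (refl_line v 0))\<bar> *\<^sub>R ?f (?I z))"
    by (intro integral_change_of_variables)
      (use lmeasurable_compact[OF S] fmeasurableD refl_line_has_derivative[OF v] inj in auto)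
  also have "\<dots> = integral S (\<lambda>z. ?f (?I z))"
    using orthogonal_transformation_refl_line[OF v] by simp
  finally have "integral (?I ` S) ?f $ 1 = integral S (\<lambda>z. ?f (?I z)) $ 1" by simp
  then show ?thesis
    using integral_component_eq_cart[of ?f "?I ` S" 1] integral_component_eq_cart[of "\<lambda>z. ?f (?I z)" S 1]
      continuous_integrable_on_compact[OF compact_continuous_image[OF continuous_on_refl_line S] fc]
      continuous_integrable_on_compact[OF S fIc]
    by simp
qed

lemma integral_negative_on_open:
  fixes f :: "'a::euclidean_space \<Rightarrow> real"
  assumes f: "f integrable_on UNIV" and nonpos: "\<And>y. f y \<le> 0"
    and W: "open W" "y0 \<in> W" and bound: "\<And>y. y \<in> W \<Longrightarrow> f y \<le> - e" and e: "e > 0"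
  shows "integral UNIV f < 0"
proof -
  obtain a b where ab: "cbox a b \<subseteq> W" "y0 \<in> box a b" "\<forall>i\<in>Basis. a \<bullet> i < b \<bullet> i"
    by (rule open_contains_cbox[OF W])
  define G where "G y = (if y \<in> cbox a b then - e else 0)" for y
  have G: "G integrable_on UNIV"
    unfolding G_def integrable_restrict_UNIV by (rule integrable_const)
  have "f y \<le> G y" for y
    using ab(1) bound nonpos unfolding G_def by auto
  then have "integral UNIV f \<le> integral UNIV G"
    by (intro integral_le[OF f G])
  also have "\<dots> = - e * measure lborel (cbox a b)"
    unfolding G_def integral_restrict_UNIV by simp
  also have "\<dots> < 0"
  proof -
    have "0 < measure lborel (cbox a b)" by (rule content_pos_lt[OF ab(3)])
    then show ?thesis using e by (simp add: mult_pos_pos)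
  qed
  finally show ?thesis .
qed

section \<open>The solid angle kernel\<close>

definition solid_angle_kernel :: "real \<Rightarrow> real^2 \<Rightarrow> real" where
  "solid_angle_kernel h w = h / ((norm w)\<^sup>2 + h\<^sup>2) powr (3/2)"

lemma solid_angle_as_kernel: "solid_angle \<Omega> h x = integral \<Omega> (\<lambda>y. solid_angle_kernel h (y - x))"
  unfolding solid_angle_def solid_angle_kernel_def ..

lemma continuous_solid_angle_kernel:
  "h > 0 \<Longrightarrow> continuous_on UNIV (\<lambda>y. solid_angle_kernel h (y - x))"
  unfolding solid_angle_kernel_def
  by (intro continuous_intros) (auto simp: add_nonneg_pos)

lemma solid_angle_kernel_less:
  assumes "h > 0" "norm a < norm b"
  shows "solid_angle_kernel h b < solid_angle_kernel h a"
proof -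
  have pos: "0 < (norm a)\<^sup>2 + h\<^sup>2" using assms by (simp add: add_nonneg_pos)
  have "(norm a)\<^sup>2 < (norm b)\<^sup>2" using assms(2) by (simp add: power_strict_mono)
  then have "((norm a)\<^sup>2 + h\<^sup>2) powr (3/2) < ((norm b)\<^sup>2 + h\<^sup>2) powr (3/2)"
    using pos by (intro powr_less_mono2) auto
  then show ?thesis unfolding solid_angle_kernel_def
    using assms(1) pos by (simp add: divide_strict_left_mono)
qed

lemma solid_angle_kernel_le:
  "h > 0 \<Longrightarrow> norm a \<le> norm b \<Longrightarrow> solid_angle_kernel h b \<le> solid_angle_kernel h a"
  using solid_angle_kernel_less[of h a b] by (cases "norm a = norm b") (auto simp: solid_angle_kernel_def)

definition kernel_gap :: "real \<Rightarrow> real^2 \<Rightarrow> real \<Rightarrow> real^2 \<Rightarrow> real^2 \<Rightarrow> real" where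
  "kernel_gap h v c x y =
     solid_angle_kernel h (y - x) - solid_angle_kernel h (y - refl_line v c x)"

lemma continuous_kernel_gap: "h > 0 \<Longrightarrow> continuous_on UNIV (kernel_gap h v c x)"
  unfolding kernel_gap_def by (intro continuous_on_diff continuous_solid_angle_kernel)

lemma kernel_gap_odd: "norm v = 1 \<Longrightarrow> kernel_gap h v c x (refl_line v c y) = - kernel_gap h v c x y"
  unfolding kernel_gap_def solid_angle_kernel_def
  by (simp add: refl_line_dist_swap refl_line_dist refl_line_involution)

lemma kernel_gap_sign:
  assumes h: "h > 0" and v: "norm v = 1" and cx: "c < x \<bullet> v"
  shows kernel_gap_nonneg: "c \<le> y \<bullet> v \<Longrightarrow> 0 \<le> kernel_gap h v c x y"
    and kernel_gap_neg: "y \<bullet> v < c \<Longrightarrow> kernel_gap h v c x y < 0"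
proof -
  have sq: "(norm (y - refl_line v c x))\<^sup>2 = (norm (y - x))\<^sup>2 + 4 * (x \<bullet> v - c) * (y \<bullet> v - c)"
    by (rule refl_line_dist_sq[OF v])
  show "0 \<le> kernel_gap h v c x y" if "c \<le> y \<bullet> v"
  proof -
    have "(norm (y - x))\<^sup>2 \<le> (norm (y - refl_line v c x))\<^sup>2"
      using sq that cx by simp
    then have "norm (y - x) \<le> norm (y - refl_line v c x)" by (simp add: power2_le_iff_abs_le)
    then show ?thesis unfolding kernel_gap_def using solid_angle_kernel_le[OF h] by simp
  qed
  show "kernel_gap h v c x y < 0" if "y \<bullet> v < c"
  proof -
    have "4 * (x \<bullet> v - c) * (y \<bullet> v - c) < 0" using that cx by (simp add: mult_pos_neg)
    then have "(norm (y - refl_line v c x))\<^sup>2 < (norm (y - x))\<^sup>2" using sq by simp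
    then have "norm (y - refl_line v c x) < norm (y - x)" by (simp add: power2_less_imp_less)
    then show ?thesis unfolding kernel_gap_def using solid_angle_kernel_less[OF h] by fastforce
  qed
qed

lemma solid_angle_reflection_difference:
  fixes c :: real and x :: "real^2"
  assumes \<Omega>: "compact \<Omega>" and h: "h > 0" and v: "norm v = 1"
  defines "F \<equiv> \<lambda>y. (if y \<in> \<Omega> then kernel_gap h v c x y else 0)
                 - (if y \<in> refl_line v c ` \<Omega> then kernel_gap h v c x y else 0)"
  shows "F integrable_on UNIV"
    and "2 * (solid_angle \<Omega> h x - solid_angle \<Omega> h (refl_line v c x)) = integral UNIV F"
proof -
  let ?g = "kernel_gap h v c x" and ?I\<Omega> = "refl_line v c ` \<Omega>"
  have gc: "continuous_on UNIV ?g" by (rule continuous_kernel_gap[OF h])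
  have I\<Omega>: "compact ?I\<Omega>" by (rule compact_continuous_image[OF continuous_on_refl_line \<Omega>])
  have ig: "?g integrable_on \<Omega>" "?g integrable_on ?I\<Omega>"
    using continuous_integrable_on_compact[OF \<Omega> gc] continuous_integrable_on_compact[OF I\<Omega> gc] by auto
  have "integral ?I\<Omega> ?g = integral \<Omega> (\<lambda>z. ?g (refl_line v c z))"
    by (rule integral_refl_line_image[OF v \<Omega> gc])
  also have "\<dots> = - integral \<Omega> ?g" by (simp add: kernel_gap_odd[OF v] integral_neg ig)
  finally have mirror: "integral ?I\<Omega> ?g = - integral \<Omega> ?g" .
  have "solid_angle \<Omega> h x - solid_angle \<Omega> h (refl_line v c x) = integral \<Omega> ?g"
    unfolding solid_angle_as_kernel kernel_gap_def
    by (rule integral_diff[symmetric];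
        rule continuous_integrable_on_compact[OF \<Omega> continuous_solid_angle_kernel[OF h]])
  moreover have i1: "(\<lambda>y. if y \<in> \<Omega> then ?g y else 0) integrable_on UNIV"
    and i2: "(\<lambda>y. if y \<in> ?I\<Omega> then ?g y else 0) integrable_on UNIV"
    using ig by (simp_all add: integrable_restrict_UNIV)
  ultimately show "2 * (solid_angle \<Omega> h x - solid_angle \<Omega> h (refl_line v c x)) = integral UNIV F"
    unfolding F_def integral_diff[OF i1 i2] integral_restrict_UNIV mirror by simp
  show "F integrable_on UNIV" unfolding F_def by (rule integrable_diff[OF i1 i2])
qed

lemma reflection_increases_solid_angle:
  fixes \<Omega> :: "(real^2) set"
  assumes \<Omega>: "compact \<Omega>" and h: "h > 0" and v: "norm v = 1" and cx: "c < x \<bullet> v"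
    and cap: "\<And>y. y \<in> \<Omega> \<Longrightarrow> c \<le> y \<bullet> v \<Longrightarrow> refl_line v c y \<in> \<Omega>"
    and y0: "y0 \<in> interior \<Omega>" "y0 \<bullet> v < c" "refl_line v c y0 \<notin> \<Omega>"
  shows "solid_angle \<Omega> h x < solid_angle \<Omega> h (refl_line v c x)"
proof -
  let ?g = "kernel_gap h v c x" and ?I = "refl_line v c"
  define F where "F y = (if y \<in> \<Omega> then ?g y else 0) - (if y \<in> ?I ` \<Omega> then ?g y else 0)" for y
  note diff = solid_angle_reflection_difference[OF \<Omega> h v, where c=c and x=x, folded F_def]
  have mirror_iff: "y \<in> ?I ` \<Omega> \<longleftrightarrow> ?I y \<in> \<Omega>" for y
    using refl_line_image_eq_vimage[OF v] by auto
  have F_nonpos: "F y \<le> 0" for y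
  proof (cases "c \<le> y \<bullet> v")
    case True
    then have "y \<in> \<Omega> \<Longrightarrow> y \<in> ?I ` \<Omega>" using cap mirror_iff by blast
    then show ?thesis unfolding F_def using kernel_gap_nonneg[OF h v cx True] by auto
  next
    case False
    then have "c \<le> ?I y \<bullet> v" by (simp add: refl_line_inner[OF v])
    then have "y \<in> ?I ` \<Omega> \<Longrightarrow> y \<in> \<Omega>"
      using cap mirror_iff refl_line_involution[OF v] by metis
    then show ?thesis
      unfolding F_def using kernel_gap_neg[OF h v cx, of y] False by (auto simp: not_le)
  qed
  have gap_y0: "?g y0 < 0" by (rule kernel_gap_neg[OF h v cx y0(2)])
  define W where "W = (interior \<Omega> - ?I ` \<Omega>) \<inter> {y. ?g y < ?g y0 / 2}"
  have "open W"
    unfolding W_def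
    using compact_imp_closed[OF compact_continuous_image[OF continuous_on_refl_line \<Omega>]]
      open_Collect_less[OF continuous_kernel_gap[OF h] continuous_on_const]
    by (intro open_Int open_Diff open_interior)
  moreover have "y0 \<in> W"
    using y0 mirror_iff gap_y0 unfolding W_def by auto
  moreover have "F y \<le> - (- ?g y0 / 2)" if "y \<in> W" for y
    using that interior_subset unfolding W_def F_def by auto
  moreover have "0 < - ?g y0 / 2" using gap_y0 by simp
  ultimately have "integral UNIV F < 0"
    by (rule integral_negative_on_open[OF diff(1) F_nonpos])
  then show ?thesis using diff(2) by simp
qed

section \<open>The minimal unfolded region\<close>

lemma cap_reflects_above_uf_upper:
  assumes "bounded \<Omega>" and v: "norm v = 1" and c: "uf_upper \<Omega> v < c"
  shows "refl_line v c ` cap_plus \<Omega> v c \<subseteq> \<Omega>"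
proof -
  define S where "S = {b. \<forall>c\<ge>b. refl_line v c ` cap_plus \<Omega> v c \<subseteq> \<Omega>}"
  obtain B where B: "\<And>z. z \<in> \<Omega> \<Longrightarrow> norm z \<le> B"
    using assms(1) bounded_iff by blast
  have "z \<bullet> v \<le> B" if "z \<in> \<Omega>" for z
    using norm_cauchy_schwarz[of z v] B[OF that] v by simp
  then have "B + 1 \<in> S" unfolding S_def cap_plus_def by force
  then obtain b where "b \<in> S" "b < c"
    using cInf_lessD[of S c] c unfolding uf_upper_def S_def by blast
  then show ?thesis unfolding S_def by auto
qed

text \<open>The composition of the reflections in two distinct parallel lines is a non-trivial
  translation, so no non-empty bounded set is mapped into itself by both.\<close>

lemma no_bounded_set_invariant_under_two_reflections:
  assumes U: "bounded U" "U \<noteq> {}" and v: "norm v = 1" and c12: "c1 < c2"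
    and inv1: "refl_line v c1 ` U \<subseteq> U" and inv2: "refl_line v c2 ` U \<subseteq> U"
  shows False
proof -
  let ?h = "\<lambda>z. z \<bullet> v"
  have bdd: "bdd_above (?h ` U)"
    by (rule bounded_imp_bdd_above[OF bounded_linear_image[OF U(1) bounded_linear_inner_left]])
  obtain p where p: "p \<in> U" "Sup (?h ` U) - 2 * (c2 - c1) < p \<bullet> v"
    using less_cSup_iff[OF _ bdd, of "Sup (?h ` U) - 2 * (c2 - c1)"] U(2) c12 by auto
  define q where "q = refl_line v c2 (refl_line v c1 p)"
  have "q \<in> U" unfolding q_def using inv1 inv2 p(1) by blast
  then have "q \<bullet> v \<le> Sup (?h ` U)" using bdd by (simp add: cSup_upper)
  moreover have "q \<bullet> v = p \<bullet> v + 2 * (c2 - c1)" unfolding q_def by (simp add: refl_line_inner[OF v])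
  ultimately show False using p(2) by simp
qed

text \<open>At a solid angle center \<open>x\<close>, every reflection in a line strictly between \<open>uf_upper\<close>
  and \<open>x\<close> maps the interior of \<open>\<Omega>\<close> into itself: otherwise the mirror image of \<open>x\<close> would
  see a strictly larger solid angle.\<close>

lemma center_reflection_preserves_interior:
  assumes \<Omega>: "compact \<Omega>" and h: "h > 0" and ctr: "solid_angle_center \<Omega> h x"
    and v: "norm v = 1" and c: "uf_upper \<Omega> v < c" "c < x \<bullet> v"
  shows "refl_line v c ` interior \<Omega> \<subseteq> interior \<Omega>"
proof -
  have cap: "refl_line v c y \<in> \<Omega>" if "y \<in> \<Omega>" "c \<le> y \<bullet> v" for y
    using cap_reflects_above_uf_upper[OF compact_imp_bounded[OF \<Omega>] v c(1)] that
    unfolding cap_plus_def by blast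
  have into: "refl_line v c ` interior \<Omega> \<subseteq> \<Omega>"
  proof (rule image_subsetI, rule ccontr)
    fix y assume y: "y \<in> interior \<Omega>" "refl_line v c y \<notin> \<Omega>"
    then have "y \<bullet> v < c" using cap interior_subset by (meson not_le subsetD)
    then have "solid_angle \<Omega> h x < solid_angle \<Omega> h (refl_line v c x)"
      using reflection_increases_solid_angle[OF \<Omega> h v c(2) cap y(1) _ y(2)] by blast
    then show False using ctr unfolding solid_angle_center_def by (meson not_le)
  qed
  have "open (refl_line v c ` interior \<Omega>)"
    unfolding refl_line_image_eq_vimage[OF v]
    by (rule open_vimage[OF open_interior continuous_on_refl_line])
  then show ?thesis using into interior_maximal by blast
qed

text \<open>The upper half of the theorem: two distinct lines between \<open>uf_upper\<close> and \<open>x\<close> would give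
  two reflections preserving the bounded, non-empty interior of \<open>\<Omega>\<close>.\<close>

lemma center_below_uf_upper:
  assumes \<Omega>: "compact \<Omega>" "interior \<Omega> \<noteq> {}" and h: "h > 0"
    and ctr: "solid_angle_center \<Omega> h x" and v: "norm v = 1"
  shows "x \<bullet> v \<le> uf_upper \<Omega> v"
proof (rule ccontr)
  let ?u = "uf_upper \<Omega> v"
  assume "\<not> x \<bullet> v \<le> ?u"
  define c1 c2 where "c1 = ?u + (x \<bullet> v - ?u) / 3" and "c2 = ?u + 2 * (x \<bullet> v - ?u) / 3"
  have c: "?u < c1" "c1 < c2" "c2 < x \<bullet> v"
    using \<open>\<not> x \<bullet> v \<le> ?u\<close> unfolding c1_def c2_def by (auto simp: field_simps)
  show False
  proof (rule no_bounded_set_invariant_under_two_reflections)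
    show "bounded (interior \<Omega>)" by (rule bounded_interior[OF compact_imp_bounded[OF \<Omega>(1)]])
    show "refl_line v c1 ` interior \<Omega> \<subseteq> interior \<Omega>"
      using c by (intro center_reflection_preserves_interior[OF \<Omega>(1) h ctr v]) auto
    show "refl_line v c2 ` interior \<Omega> \<subseteq> interior \<Omega>"
      using c by (intro center_reflection_preserves_interior[OF \<Omega>(1) h ctr v]) auto
  qed (use \<Omega>(2) v c in auto)
qed

lemma uf_lower_eq_uf_upper_uminus: "uf_lower \<Omega> v = - uf_upper \<Omega> (- v)"
proof -
  define A where "A = {b. \<forall>c\<le>b. refl_line v c ` cap_minus \<Omega> v c \<subseteq> \<Omega>}"
  have cap: "cap_plus \<Omega> (- v) (- c) = cap_minus \<Omega> v c" for c
    unfolding cap_minus_def cap_plus_def by auto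
  have "{b. \<forall>c\<ge>b. refl_line (- v) c ` cap_plus \<Omega> (- v) c \<subseteq> \<Omega>} = uminus ` A"
  proof (rule set_eqI)
    fix b
    define P where "P c \<longleftrightarrow> refl_line v c ` cap_minus \<Omega> v c \<subseteq> \<Omega>" for c
    have "refl_line (- v) c ` cap_plus \<Omega> (- v) c \<subseteq> \<Omega> \<longleftrightarrow> P (- c)" for c
      unfolding P_def using cap[of "- c"] refl_line_uminus[of v "- c"] by simp
    then have "(\<forall>c\<ge>b. refl_line (- v) c ` cap_plus \<Omega> (- v) c \<subseteq> \<Omega>) \<longleftrightarrow> (\<forall>c\<le>- b. P c)"
      by (metis minus_le_iff minus_minus)
    moreover have "b \<in> uminus ` A \<longleftrightarrow> - b \<in> A" by force
    ultimately show "b \<in> {b. \<forall>c\<ge>b. refl_line (- v) c ` cap_plus \<Omega> (- v) c \<subseteq> \<Omega>} \<longleftrightarrow> b \<in> uminus ` A"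
      unfolding A_def P_def by simp
  qed
  then have "uf_upper \<Omega> (- v) = - Sup A"
    unfolding uf_upper_def Inf_real_def by (simp add: image_image)
  then show ?thesis unfolding uf_lower_def A_def by simp
qed

theorem theorem2p5:
  fixes \<Omega> :: "(real^2) set" and h :: real and x :: "real^2"
  assumes "compact \<Omega>" and "interior \<Omega> \<noteq> {}" and "h > 0"
    and "solid_angle_center \<Omega> h x"
  shows "x \<in> min_unfolded_region \<Omega>"
  unfolding min_unfolded_region_def
proof (intro InterI ballI, clarsimp)
  fix v :: "real^2" assume v: "norm v = 1"
  have "x \<bullet> v \<le> uf_upper \<Omega> v" by (rule center_below_uf_upper[OF assms v])
  moreover have "x \<bullet> (- v) \<le> uf_upper \<Omega> (- v)" by (rule center_below_uf_upper[OF assms]) (use v in simp)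
  ultimately show "uf_lower \<Omega> v \<le> x \<bullet> v \<and> x \<bullet> v \<le> uf_upper \<Omega> v"
    unfolding uf_lower_eq_uf_upper_uminus by simp
qed

end
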